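(* Let $r\geq 2$, $l\in\{0,1,\ldots,r-1\}$ and $n\geq 1$ be integers, and define the polynomial $$h(s)=\sum_{k=0}^{n}(-1)^k\binom{r(n-k)+k+l}{k}s^{n-k}.$$ Then all roots of $h$ are real and lie in the open interval $\left(0,\ r^r/(r-1)^{r-1}\right)$. Moreover $r^r/(r-1)^{r-1}<er$, where $e$ is Euler's number, so all roots lie in $(0,er)$. *)

theory Defs
  imports "HOL-Analysis.Analysis" "HOL-Computational_Algebra.Polynomial"
begin

definition hpoly :: "nat \<Rightarrow> nat \<Rightarrow> nat \<Rightarrow> real poly" where
  "hpoly r l n = (\<Sum>k=0..n. monom ((-1) ^ k * real ((r * (n - k) + k + l) choose k)) (n - k))"

end

theory Submission
  imports Defs
begin

text \<open>
  The polynomial \<open>hpoly r l n\<close> is the member \<open>N = r n + l\<close> of the sequence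
  \<open>P\<^sub>N = hpoly r (N mod r) (N div r)\<close>, which obeys Pascal's rule in the form
  \<open>P\<^sub>N = c\<^sub>N P\<^sub>N\<^sub>-\<^sub>1 - P\<^sub>N\<^sub>-\<^sub>r\<close> with \<open>c\<^sub>N = x\<close> if \<open>r\<close> divides \<open>N\<close> and \<open>c\<^sub>N = 1\<close> otherwise.
  By induction over windows of \<open>r\<close> consecutive members, all of them have simple real roots in
  \<open>(0, B)\<close>, \<open>B = r\<^sup>r / (r - 1)\<^sup>r\<^sup>-\<^sup>1\<close>, and the roots of each member interlace those of every
  later member of the window: the recurrence makes \<open>P\<^sub>M\<^sub>+\<^sub>r\<close> alternate in sign at the roots of
  \<open>P\<^sub>M\<^sub>+\<^sub>r\<^sub>-\<^sub>1\<close> and \<open>P\<^sub>M\<^sub>+\<^sub>1\<close>, so the intermediate value theorem produces all of its roots.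
  Positivity at \<open>B\<close> holds because the normalised values \<open>w\<^sub>N = P\<^sub>N(B) / B\<^sup>N\<^sup>d\<^sup>i\<^sup>v\<^sup>r\<close> satisfy
  \<open>w\<^sub>N = w\<^sub>N\<^sub>-\<^sub>1 - w\<^sub>N\<^sub>-\<^sub>r / B\<close>, and \<open>B\<close> is exactly large enough for such a recurrence to stay positive.
  Finally \<open>B = r (1 + 1/(r - 1))\<^sup>r\<^sup>-\<^sup>1 < e r\<close>.
\<close>

lemma coeff_hpoly:
  "coeff (hpoly r l n) i =
     (if i \<le> n then (-1) ^ (n - i) * real ((r * i + (n - i) + l) choose (n - i)) else 0)"
proof -
  have "coeff (hpoly r l n) i =
      (\<Sum>k=0..n. if k = n - i \<and> i \<le> n then (-1) ^ k * real ((r * (n - k) + k + l) choose k) else 0)"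
    unfolding hpoly_def coeff_sum coeff_monom by (rule sum.cong) auto
  then show ?thesis
    by (cases "i \<le> n") (simp_all add: sum.delta)
qed

lemma hpoly_rec_Suc:
  assumes "1 \<le> n"
  shows "hpoly r (Suc l) n = hpoly r l n - hpoly r (Suc l) (n - 1)"
proof (rule poly_eqI)
  fix i
  show "coeff (hpoly r (Suc l) n) i = coeff (hpoly r l n - hpoly r (Suc l) (n - 1)) i"
  proof (cases "i < n")
    case True
    then obtain t where t: "n - i = Suc t" "n - 1 - i = t"
      by (metis Suc_diff_Suc diff_Suc_1 diff_commute)
    have "r * i + Suc t + Suc l = Suc (r * i + Suc t + l)" "r * i + t + Suc l = r * i + Suc t + l"
      by simp_all
    with True t show ?thesis
      by (simp add: coeff_hpoly del: binomial_Suc_Suc) (simp add: algebra_simps)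
  next
    case False
    with assms show ?thesis by (cases "i = n") (auto simp: coeff_hpoly)
  qed
qed

lemma hpoly_rec_0:
  assumes "1 \<le> n" "1 \<le> r"
  shows "hpoly r 0 n = pCons 0 (hpoly r (r - 1) (n - 1)) - hpoly r 0 (n - 1)"
proof (rule poly_eqI)
  fix i
  show "coeff (hpoly r 0 n) i = coeff (pCons 0 (hpoly r (r - 1) (n - 1)) - hpoly r 0 (n - 1)) i"
  proof (cases i)
    case 0
    with assms show ?thesis by (cases n) (auto simp: coeff_hpoly)
  next
    case (Suc i')
    then have shift: "coeff (pCons 0 q) i = coeff q i'" for q :: "real poly"
      by simp
    consider "i < n" | "i = n" | "n < i" by linarith
    then show ?thesis
    proof cases
      case 1
      then obtain t where t: "n = Suc (i + t)" by (auto simp: less_iff_Suc_add)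
      have "r * i' + Suc t + (r - 1) = r * i + t"
        using Suc assms by (simp add: algebra_simps)
      with Suc t show ?thesis
        by (simp add: coeff_hpoly algebra_simps)
    next
      case 2
      show ?thesis
        unfolding coeff_diff shift using 2 Suc assms by (auto simp: coeff_hpoly)
    qed (use Suc assms in \<open>auto simp: coeff_hpoly\<close>)
  qed
qed

definition hseq :: "nat \<Rightarrow> nat \<Rightarrow> real poly" where
  "hseq r N = hpoly r (N mod r) (N div r)"

lemma hseq_hpoly: "l < r \<Longrightarrow> hseq r (r * n + l) = hpoly r l n"
  by (simp add: hseq_def)

lemma hseq_less: "N < r \<Longrightarrow> hseq r N = 1"
  by (simp add: hseq_def hpoly_def)

lemma coeff_hseq_degree: "coeff (hseq r N) (N div r) = 1"
  by (simp add: hseq_def coeff_hpoly)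

lemma degree_hseq: "degree (hseq r N) = N div r"
proof (rule antisym)
  show "degree (hseq r N) \<le> N div r"
    by (rule degree_le) (simp add: hseq_def coeff_hpoly)
  show "N div r \<le> degree (hseq r N)"
    by (rule le_degree) (simp add: coeff_hseq_degree)
qed

lemma hseq_rec:
  assumes "0 < r" "r \<le> N"
  shows "hseq r N = (if N mod r = 0 then pCons 0 (hseq r (N - 1)) else hseq r (N - 1)) - hseq r (N - r)"
proof -
  obtain n l where N: "N = r * n + l" and "l < r"
    using assms(1) div_mult_mod_eq[of N r] mod_less_divisor by (metis mult.commute)
  moreover have "1 \<le> n"
    using assms N \<open>l < r\<close> by (cases n) auto
  ultimately have N_r: "N - r = r * (n - 1) + l"
    by (cases n) (auto simp: algebra_simps)
  show ?thesis
  proof (cases l)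
    case 0
    have "N - 1 = r * (n - 1) + (r - 1)"
      using N 0 \<open>1 \<le> n\<close> assms(1) by (cases n) (auto simp: algebra_simps)
    then have "hpoly r (r - 1) (n - 1) = hseq r (N - 1)"
      using assms(1) hseq_hpoly[of "r - 1" r "n - 1"] by simp
    moreover have "hpoly r 0 (n - 1) = hseq r (N - r)"
      using N_r 0 assms(1) hseq_hpoly[of 0 r "n - 1"] by simp
    moreover have "hseq r N = hpoly r 0 n"
      using N 0 assms(1) hseq_hpoly[of 0 r n] by simp
    ultimately show ?thesis
      using hpoly_rec_0[OF \<open>1 \<le> n\<close>] assms(1) N 0 by simp
  next
    case (Suc l')
    have "N - 1 = r * n + l'"
      using N Suc by simp
    then have "hpoly r l' n = hseq r (N - 1)"
      using Suc \<open>l < r\<close> hseq_hpoly[of l' r n] by simp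
    moreover have "hpoly r (Suc l') (n - 1) = hseq r (N - r)"
      using N_r Suc \<open>l < r\<close> hseq_hpoly[of l r "n - 1"] by simp
    moreover have "hseq r N = hpoly r (Suc l') n"
      using N Suc \<open>l < r\<close> hseq_hpoly[of l r n] by simp
    ultimately show ?thesis
      using hpoly_rec_Suc[OF \<open>1 \<le> n\<close>] N Suc \<open>l < r\<close> by simp
  qed
qed

definition root_bound :: "nat \<Rightarrow> real" where
  "root_bound r = real r ^ r / real (r - 1) ^ (r - 1)"

lemma root_bound_pos: "2 \<le> r \<Longrightarrow> 0 < root_bound r"
  unfolding root_bound_def by (intro divide_pos_pos) auto

lemma root_bound_less_exp:
  assumes "2 \<le> r"
  shows "root_bound r < exp 1 * real r"
proof -
  define m where "m = r - 1"
  have "1 \<le> m" and r_eq: "r = Suc m"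
    using assms by (simp_all add: m_def)
  have "root_bound r = real r * (1 + 1 / real m) ^ m"
    using \<open>1 \<le> m\<close> by (simp add: root_bound_def r_eq power_divide field_simps)
  also have "(1 + 1 / real m) ^ m = exp (real m * ln (1 + 1 / real m))"
    by (subst exp_of_nat_mult) (simp add: add_pos_nonneg)
  also have "\<dots> < exp 1"
  proof -
    have "real m * ln (1 + 1 / real m) < real m * (1 / real m)"
      using \<open>1 \<le> m\<close> by (intro mult_strict_left_mono ln_add_one_self_less_self) auto
    then show ?thesis
      using \<open>1 \<le> m\<close> by simp
  qed
  finally show ?thesis
    using assms by (simp add: mult.commute)
qed

lemma pow_mult_le_of_ratio_bound:
  fixes w :: "nat \<Rightarrow> real"
  assumes "0 \<le> \<mu>" "j \<le> n" "\<And>k. n - j < k \<Longrightarrow> k \<le> n \<Longrightarrow> \<mu> * w (k - 1) \<le> w k"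
  shows "\<mu> ^ j * w (n - j) \<le> w n"
  using assms(2,3)
proof (induction j)
  case (Suc j)
  have "\<mu> ^ Suc j * w (n - Suc j) = \<mu> ^ j * (\<mu> * w (n - j - 1))"
    by (simp add: algebra_simps)
  also have "\<dots> \<le> \<mu> ^ j * w (n - j)"
    using Suc.prems(2)[of "n - j"] Suc.prems(1) assms(1) by (intro mult_left_mono) auto
  also have "\<dots> \<le> w n"
    using Suc by simp
  finally show ?case .
qed simp

text \<open>With \<open>\<mu> = (r - 1) / r\<close>, the bound on \<open>c\<close> says exactly \<open>c \<le> \<mu>\<^sup>r\<^sup>-\<^sup>1 / r\<close>; by induction
  every term is at least \<open>\<mu>\<close> times its predecessor, so that the subtracted term \<open>c w\<^sub>k\<^sub>-\<^sub>r\<close> is at most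
  \<open>w\<^sub>k\<^sub>-\<^sub>1 / r\<close>.\<close>
lemma recurrence_pos:
  fixes w :: "nat \<Rightarrow> real"
  assumes r: "2 \<le> r"
    and init: "\<And>k. k < r \<Longrightarrow> w k = 1"
    and rec: "\<And>k. r \<le> k \<Longrightarrow> w k = w (k - 1) - c * w (k - r)"
    and c: "0 \<le> c" "c * real r ^ r \<le> real (r - 1) ^ (r - 1)"
  shows "0 < w k"
proof -
  define \<mu> where "\<mu> = (real r - 1) / real r"
  have \<mu>: "0 < \<mu>" "\<mu> \<le> 1"
    using r by (auto simp: \<mu>_def)
  have c_le: "c \<le> \<mu> ^ (r - 1) / real r"
  proof -
    have "real r ^ r = real r ^ (r - 1) * real r"
      using r by (metis Suc_diff_1 less_le_trans pos2 power_Suc2)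
    with c r show ?thesis
      by (simp add: \<mu>_def power_divide field_simps of_nat_diff)
  qed
  have "0 < w k \<and> (1 \<le> k \<longrightarrow> \<mu> * w (k - 1) \<le> w k)" for k
  proof (induction k rule: less_induct)
    case (less k)
    show ?case
    proof (cases "k < r")
      case True
      with init \<mu> show ?thesis by simp
    next
      case False
      have prev_pos: "0 < w (k - 1)" "0 < w (k - r)"
        using less.IH[of "k - 1"] less.IH[of "k - r"] False r by auto
      have "\<mu> ^ (r - 1) * w (k - 1 - (r - 1)) \<le> w (k - 1)"
        using less.IH False \<mu> by (intro pow_mult_le_of_ratio_bound) auto
      moreover have "k - 1 - (r - 1) = k - r"
        using False r by simp
      ultimately have chain: "\<mu> ^ (r - 1) * w (k - r) \<le> w (k - 1)"
        by simp
      have "c * w (k - r) \<le> \<mu> ^ (r - 1) / real r * w (k - r)"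
        using c_le prev_pos by (intro mult_right_mono) auto
      also have "\<dots> \<le> w (k - 1) / real r"
        using chain r by (simp add: divide_right_mono)
      finally have "c * w (k - r) \<le> w (k - 1) / real r" .
      moreover have "w (k - 1) - w (k - 1) / real r = \<mu> * w (k - 1)"
        using r by (simp add: \<mu>_def field_simps)
      ultimately have "\<mu> * w (k - 1) \<le> w k"
        using rec[of k] False by linarith
      moreover have "0 < \<mu> * w (k - 1)"
        using \<mu> prev_pos by simp
      ultimately show ?thesis by simp
    qed
  qed
  then show ?thesis by blast
qed

lemma poly_hseq_root_bound_pos:
  assumes r: "2 \<le> r"
  shows "0 < poly (hseq r N) (root_bound r)"
proof -
  define B where "B = root_bound r"
  define w where "w k = poly (hseq r k) B / B ^ (k div r)" for k
  have B: "0 < B"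
    using r root_bound_pos by (simp add: B_def)
  have "w k = w (k - 1) - 1 / B * w (k - r)" if "r \<le> k" for k
  proof -
    define e where "e = (if k mod r = 0 then B else 1)"
    have "B ^ (k div r) = e * B ^ ((k - 1) div r)"
      using div_Suc[of "k - 1" r] that r by (simp add: e_def)
    moreover have "B ^ (k div r) = B * B ^ ((k - r) div r)"
      using that r by (simp add: le_div_geq)
    moreover have "poly (hseq r k) B = e * poly (hseq r (k - 1)) B - poly (hseq r (k - r)) B"
      using that r by (simp add: hseq_rec[of r k] e_def)
    moreover have "0 < e"
      using B by (simp add: e_def)
    ultimately show ?thesis
      using B unfolding w_def by (simp add: field_simps)
  qed
  moreover have "1 / B * real r ^ r = real (r - 1) ^ (r - 1)"
    using r B by (simp add: B_def root_bound_def)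
  ultimately have "0 < w N"
    using r B by (intro recurrence_pos[where c = "1 / B"]) (auto simp: w_def hseq_less)
  then show ?thesis
    using B by (simp add: w_def B_def zero_less_divide_iff)
qed

lemma monic_eq_prod_linear_factors:
  fixes p :: "'a::idom poly"
  assumes "degree p = d" "coeff p d = 1" "\<And>j. j < d \<Longrightarrow> poly p (\<rho> j) = 0" "inj_on \<rho> {..<d}"
  shows "p = (\<Prod>j<d. [:-\<rho> j, 1:])"
  using assms
proof (induction d arbitrary: p)
  case 0
  then show ?case
    by (metis coeff_pCons_0 degree_0_id lessThan_0 prod.empty one_pCons)
next
  case (Suc d)
  obtain q where p: "p = [:-\<rho> d, 1:] * q"
    using Suc.prems(3)[of d] by (meson dvdE lessI poly_eq_0_iff_dvd)
  with Suc.prems(2) have "q \<noteq> 0"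
    by auto
  then have "degree q = d"
    using Suc.prems(1) p degree_mult_eq[of "[:-\<rho> d, 1:]" q] by simp
  moreover have "coeff q d = 1"
    using Suc.prems(1,2) p lead_coeff_mult[of "[:-\<rho> d, 1:]" q] \<open>degree q = d\<close> by simp
  moreover have "poly q (\<rho> j) = 0" if "j < d" for j
  proof -
    have "\<rho> j \<noteq> \<rho> d"
      using Suc.prems(4) that by (auto dest: inj_onD)
    with Suc.prems(3)[of j] that p show ?thesis
      by simp
  qed
  moreover have "inj_on \<rho> {..<d}"
    using Suc.prems(4) by (rule inj_on_subset) auto
  ultimately have "q = (\<Prod>j<d. [:-\<rho> j, 1:])"
    using Suc.IH by blast
  with p show ?case
    by (simp add: mult.commute)
qed

lemma sign_prod_split:
  fixes \<rho> :: "nat \<Rightarrow> 'a::comm_ring_1"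
  assumes "k \<le> d"
  shows "(-1) ^ k * (\<Prod>i<d. x - \<rho> i) = (\<Prod>i<k. \<rho> i - x) * (\<Prod>i\<in>{k..<d}. x - \<rho> i)"
proof -
  have "{..<d} = {..<k} \<union> {k..<d}"
    using assms by auto
  then have "(\<Prod>i<d. x - \<rho> i) = (\<Prod>i<k. x - \<rho> i) * (\<Prod>i\<in>{k..<d}. x - \<rho> i)"
    by (metis prod.union_disjoint finite_lessThan finite_atLeastLessThan ivl_disj_int_one(2))
  moreover have "(\<Prod>i<k. \<rho> i - x) = (-1) ^ k * (\<Prod>i<k. x - \<rho> i)"
    by (induction k) (simp_all add: algebra_simps)
  ultimately show ?thesis
    by (simp add: mult.assoc)
qed

text \<open>Here \<open>x\<close> lies between \<open>\<rho> j\<close> and \<open>\<rho> (j - 1)\<close>; a missing neighbour at \<open>j = d\<close> or \<open>j = 0\<close>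
  is read as \<open>-\<infinity>\<close> or \<open>+\<infinity>\<close>.\<close>
lemma sign_prod_pos_between:
  fixes \<rho> :: "nat \<Rightarrow> 'a::linordered_idom"
  assumes "antimono_on {..<d} \<rho>" "j \<le> d" "j < d \<Longrightarrow> \<rho> j < x" "0 < j \<Longrightarrow> x < \<rho> (j - 1)"
  shows "0 < (-1) ^ j * (\<Prod>i<d. x - \<rho> i)"
proof -
  have "x < \<rho> i" if "i < j" for i
  proof -
    have "\<rho> (j - 1) \<le> \<rho> i"
      using assms(2) that by (intro monotone_onD[OF assms(1)]) auto
    with assms(4) that show ?thesis by simp
  qed
  moreover have "\<rho> i < x" if "j \<le> i" "i < d" for i
    using assms that monotone_onD[OF assms(1), of j i] by auto
  ultimately show ?thesis
    unfolding sign_prod_split[OF assms(2)] by (auto intro!: mult_pos_pos prod_pos)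
qed

lemma sign_prod_nonneg_between:
  fixes \<rho> :: "nat \<Rightarrow> 'a::linordered_idom"
  assumes "antimono_on {..<d} \<rho>" "j \<le> d" "j < d \<Longrightarrow> \<rho> j \<le> x" "0 < j \<Longrightarrow> x \<le> \<rho> (j - 1)"
  shows "0 \<le> (-1) ^ j * (\<Prod>i<d. x - \<rho> i)"
proof -
  have "x \<le> \<rho> i" if "i < j" for i
  proof -
    have "\<rho> (j - 1) \<le> \<rho> i"
      using assms(2) that by (intro monotone_onD[OF assms(1)]) auto
    with assms(4) that show ?thesis by simp
  qed
  moreover have "\<rho> i \<le> x" if "j \<le> i" "i < d" for i
    using assms that monotone_onD[OF assms(1), of j i] by auto
  ultimately show ?thesis
    unfolding sign_prod_split[OF assms(2)] by (auto intro!: mult_nonneg_nonneg prod_nonneg)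
qed

lemma strict_antimono_on_lessThanI:
  fixes f :: "nat \<Rightarrow> 'a::order"
  assumes "\<And>j. Suc j < d \<Longrightarrow> f (Suc j) < f j"
  shows "strict_antimono_on {..<d} f"
proof (rule monotone_onI)
  fix i j
  assume "i \<in> {..<d}" "j \<in> {..<d}" "i < j"
  then have "Suc i \<le> j" "j < d"
    by auto
  then show "f j < f i"
  proof (induction j rule: dec_induct)
    case base
    then show ?case by (rule assms)
  next
    case (step n)
    then show ?case
      using assms[of n] by (meson Suc_lessD order.strict_trans)
  qed
qed

lemma map_poly_of_real_mult:
  "map_poly (of_real :: real \<Rightarrow> 'a::{real_algebra_1,comm_ring_1}) (p * q) = map_poly of_real p * map_poly of_real q"
  by (rule poly_eqI) (simp add: coeff_map_poly coeff_mult of_real_sum)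

lemma poly_map_poly_of_real_linear_factors:
  fixes n :: nat
  shows "poly (map_poly of_real (\<Prod>j<n. [:-\<rho> j, 1:])) (z :: 'a::{real_algebra_1,comm_ring_1}) =
     (\<Prod>j<n. z - of_real (\<rho> j))"
  by (induction n) (simp_all add: map_poly_of_real_mult map_poly_pCons del: mult_pCons_left mult_pCons_right)

lemma div_add_pred_eq_Suc_div:
  fixes M r :: nat
  assumes "0 < r" "M mod r \<noteq> 0"
  shows "(M + r - 1) div r = Suc (M div r)"
proof -
  have "M + r - 1 = (M mod r - 1) + Suc (M div r) * r"
    using assms(2) mod_div_mult_eq[of M r] unfolding mult_Suc by linarith
  also have "(M mod r - 1 + Suc (M div r) * r) div r = Suc (M div r) + (M mod r - 1) div r"
    using assms(1) by (intro div_mult_self1) simp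
  finally show ?thesis
    using assms(1) by (simp add: less_imp_diff_less)
qed

definition interlaced :: "(nat \<Rightarrow> real) \<Rightarrow> nat \<Rightarrow> (nat \<Rightarrow> real) \<Rightarrow> nat \<Rightarrow> bool" where
  "interlaced \<alpha> a \<beta> b \<longleftrightarrow> (\<forall>j<a. \<alpha> j < \<beta> j) \<and> (\<forall>j. Suc j < b \<longrightarrow> \<beta> (Suc j) < \<alpha> j)"

text \<open>The induction runs over windows of \<open>r\<close> consecutive members because \<open>hseq r (M + r)\<close> is
  determined by \<open>hseq r M\<close> and \<open>hseq r (M + r - 1)\<close>.\<close>
definition root_window :: "nat \<Rightarrow> nat \<Rightarrow> (nat \<Rightarrow> nat \<Rightarrow> real) \<Rightarrow> bool" where
  "root_window r M \<rho> \<longleftrightarrow>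
     (\<forall>m\<in>{M..<M + r}.
        hseq r m = (\<Prod>j<m div r. [:-\<rho> m j, 1:]) \<and>
        (\<forall>j<m div r. 0 < \<rho> m j \<and> \<rho> m j < root_bound r) \<and>
        strict_antimono_on {..<m div r} (\<rho> m) \<and>
        (\<forall>m'\<in>{m<..<M + r}. interlaced (\<rho> m) (m div r) (\<rho> m') (m' div r)))"

lemma root_window_0: "root_window r 0 \<rho>"
  by (simp add: root_window_def interlaced_def hseq_less)

locale root_window_step =
  fixes r M :: nat and \<rho> :: "nat \<Rightarrow> nat \<Rightarrow> real"
  assumes two_le_r: "2 \<le> r"
    and window: "root_window r M \<rho>"
begin

lemma poly_hseq_window:
  "M \<le> m \<Longrightarrow> m < M + r \<Longrightarrow> poly (hseq r m) x = (\<Prod>j<m div r. x - \<rho> m j)"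
  using window by (simp add: root_window_def poly_prod)

lemma window_root_bounds:
  "M \<le> m \<Longrightarrow> m < M + r \<Longrightarrow> j < m div r \<Longrightarrow> 0 < \<rho> m j \<and> \<rho> m j < root_bound r"
  using window by (simp add: root_window_def)

lemma window_strict_antimono:
  "M \<le> m \<Longrightarrow> m < M + r \<Longrightarrow> strict_antimono_on {..<m div r} (\<rho> m)"
  using window by (simp add: root_window_def)

lemma window_antimono:
  "M \<le> m \<Longrightarrow> m < M + r \<Longrightarrow> antimono_on {..<m div r} (\<rho> m)"
  using window_strict_antimono strict_antimono_iff_antimono by blast

lemma window_interlaced:
  "M \<le> m \<Longrightarrow> m < m' \<Longrightarrow> m' < M + r \<Longrightarrow> interlaced (\<rho> m) (m div r) (\<rho> m') (m' div r)"
  using window by (simp add: root_window_def)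

lemma window_root_le:
  assumes "M \<le> m" "m \<le> m'" "m' < M + r" "j < m div r"
  shows "\<rho> m j \<le> \<rho> m' j"
  using window_interlaced[of m m'] assms by (cases "m = m'") (auto simp: interlaced_def)

lemma window_root_shift_less:
  assumes "M \<le> m" "m \<le> m'" "m' < M + r" "Suc j < m' div r"
  shows "\<rho> m' (Suc j) < \<rho> m j"
proof (cases "m = m'")
  case True
  with assms show ?thesis
    using monotone_onD[OF window_strict_antimono, of m j "Suc j"] by simp
next
  case False
  with assms show ?thesis
    using window_interlaced[of m m'] by (simp add: interlaced_def)
qed

lemma window_div_le:
  "M div r \<le> Suc M div r" "Suc M div r \<le> (M + r - 1) div r"
  "(M + r - 1) div r \<le> Suc (M div r)" "(M + r) div r = Suc (M div r)"
  using two_le_r div_le_mono[of "M + r - 1" "M + r" r] by (simp_all add: div_le_mono)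

lemma poly_hseq_next:
  "poly (hseq r (M + r)) x =
     (if (M + r) mod r = 0 then x else 1) * poly (hseq r (M + r - 1)) x - poly (hseq r M) x"
  using hseq_rec[of r "M + r"] two_le_r by simp

text \<open>The \<open>j\<close>-th root of \<open>hseq r (M + r)\<close> is found in the interval \<open>(lower j, upper j)\<close>.\<close>
definition lower :: "nat \<Rightarrow> real" where
  "lower j = (if j < (M + r - 1) div r then \<rho> (M + r - 1) j else 0)"

definition upper :: "nat \<Rightarrow> real" where
  "upper j = (if j = 0 then root_bound r else \<rho> (Suc M) (j - 1))"

lemma sign_at_lower:
  assumes "j \<le> M div r"
  shows "0 < (-1) ^ Suc j * poly (hseq r (M + r)) (lower j)"
proof (cases "j < (M + r - 1) div r")
  case True
  define \<xi> where "\<xi> = \<rho> (M + r - 1) j"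
  have "poly (hseq r (M + r - 1)) \<xi> = 0"
    using True two_le_r by (auto simp: poly_hseq_window \<xi>_def)
  moreover have "0 < (-1) ^ j * (\<Prod>i<M div r. \<xi> - \<rho> M i)"
  proof (rule sign_prod_pos_between)
    show "\<rho> M j < \<xi>" if "j < M div r"
      using window_interlaced[of M "M + r - 1"] that two_le_r
      by (simp add: interlaced_def \<xi>_def)
    show "\<xi> < \<rho> M (j - 1)" if "0 < j"
      using window_root_shift_less[of M "M + r - 1" "j - 1"] that True two_le_r
      by (simp add: \<xi>_def)
  qed (use assms two_le_r window_antimono in auto)
  ultimately show ?thesis
    using True two_le_r by (simp add: poly_hseq_next poly_hseq_window[of M] lower_def \<xi>_def)
next
  case False
  with assms window_div_le(1,2) have j: "j = M div r" "(M + r - 1) div r = M div r"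
    by linarith+
  then have "M mod r = 0"
    using div_add_pred_eq_Suc_div[of r M] two_le_r by auto
  moreover have "0 < (-1) ^ j * (\<Prod>i<M div r. 0 - \<rho> M i)"
    by (rule sign_prod_pos_between) (use j two_le_r window_root_bounds window_antimono in auto)
  ultimately show ?thesis
    using False two_le_r by (simp add: poly_hseq_next poly_hseq_window lower_def)
qed

lemma sign_at_upper:
  assumes "j \<le> M div r"
  shows "0 < (-1) ^ j * poly (hseq r (M + r)) (upper j)"
proof (cases "j = 0")
  case True
  then show ?thesis
    using poly_hseq_root_bound_pos[OF two_le_r] by (simp add: upper_def)
next
  case False
  define \<eta> where "\<eta> = \<rho> (Suc M) (j - 1)"
  have j: "j - 1 < Suc M div r" "j \<le> (M + r - 1) div r" "Suc M \<le> M + r - 1"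
    using assms False window_div_le(1,2) two_le_r by linarith+
  have "0 < \<eta>"
    using window_root_bounds[of "Suc M"] j two_le_r by (simp add: \<eta>_def)
  have old: "0 < (-1) ^ (j - 1) * (\<Prod>i<M div r. \<eta> - \<rho> M i)"
  proof (rule sign_prod_pos_between)
    show "\<rho> M (j - 1) < \<eta>" if "j - 1 < M div r"
      using window_interlaced[of M "Suc M"] that two_le_r by (simp add: interlaced_def \<eta>_def)
    show "\<eta> < \<rho> M (j - 1 - 1)" if "0 < j - 1"
    proof -
      obtain k where "j - 1 = Suc k"
        using \<open>0 < j - 1\<close> gr0_conv_Suc by blast
      then show ?thesis
        using window_root_shift_less[of M "Suc M" k] j two_le_r by (simp add: \<eta>_def)
    qed
  qed (use assms two_le_r window_antimono in auto)
  have last: "0 \<le> (-1) ^ j * (\<Prod>i<(M + r - 1) div r. \<eta> - \<rho> (M + r - 1) i)"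
  proof (rule sign_prod_nonneg_between)
    show "\<rho> (M + r - 1) j \<le> \<eta>" if "j < (M + r - 1) div r"
      using window_root_shift_less[of "Suc M" "M + r - 1" "j - 1"] that j False two_le_r
      by (simp add: \<eta>_def)
    show "\<eta> \<le> \<rho> (M + r - 1) (j - 1)"
      using window_root_le[of "Suc M" "M + r - 1" "j - 1"] j by (simp add: \<eta>_def)
  qed (use j window_antimono in auto)
  have "(-1) ^ j * poly (hseq r (M + r)) \<eta> =
      (if (M + r) mod r = 0 then \<eta> else 1) *
        ((-1) ^ j * (\<Prod>i<(M + r - 1) div r. \<eta> - \<rho> (M + r - 1) i))
      + (-1) ^ (j - 1) * (\<Prod>i<M div r. \<eta> - \<rho> M i)"
    using False two_le_r by (cases j) (simp_all add: poly_hseq_next poly_hseq_window algebra_simps)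
  also have "\<dots> > 0"
    using old last \<open>0 < \<eta>\<close> by (intro add_nonneg_pos) simp_all
  finally show ?thesis
    using False by (simp add: upper_def \<eta>_def)
qed

lemma lower_less_upper:
  assumes "j \<le> M div r"
  shows "lower j < upper j"
proof (cases "j = 0")
  case True
  then show ?thesis
    using window_root_bounds[of "M + r - 1" 0] root_bound_pos[OF two_le_r] two_le_r
    by (simp add: lower_def upper_def)
next
  case False
  have "Suc M \<le> M + r - 1" "j - 1 < Suc M div r"
    using assms False window_div_le(1) two_le_r by linarith+
  then show ?thesis
    using False window_root_shift_less[of "Suc M" "M + r - 1" "j - 1"] window_root_bounds[of "Suc M" "j - 1"]
    by (simp add: lower_def upper_def)
qed

lemma roots_between:
  "\<exists>\<sigma>. \<forall>j\<le>M div r. lower j < \<sigma> j \<and> \<sigma> j < upper j \<and> poly (hseq r (M + r)) (\<sigma> j) = 0"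
proof -
  have "\<exists>x. lower j < x \<and> x < upper j \<and> poly (hseq r (M + r)) x = 0" if "j \<le> M div r" for j
  proof -
    let ?a = "poly (hseq r (M + r)) (lower j)" and ?b = "poly (hseq r (M + r)) (upper j)"
    have "(-1) ^ Suc j * ?a * ((-1) ^ j * ?b) = - (?a * ?b)"
      by (cases "even j") (simp_all add: algebra_simps)
    moreover have "0 < (-1) ^ Suc j * ?a * ((-1) ^ j * ?b)"
      by (rule mult_pos_pos[OF sign_at_lower[OF that] sign_at_upper[OF that]])
    ultimately have "?a * ?b < 0"
      by linarith
    then show ?thesis
      using poly_IVT[OF lower_less_upper[OF that]] by blast
  qed
  then show ?thesis
    by metis
qed

definition new_root :: "nat \<Rightarrow> real" where
  "new_root = (SOME \<sigma>. \<forall>j\<le>M div r.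
     lower j < \<sigma> j \<and> \<sigma> j < upper j \<and> poly (hseq r (M + r)) (\<sigma> j) = 0)"

lemma new_root:
  assumes "j \<le> M div r"
  shows "lower j < new_root j" "new_root j < upper j" "poly (hseq r (M + r)) (new_root j) = 0"
  using someI_ex[OF roots_between] assms unfolding new_root_def by blast+

lemma new_root_bounds:
  assumes "j < (M + r) div r"
  shows "0 < new_root j \<and> new_root j < root_bound r"
proof -
  have "0 \<le> lower j"
    using window_root_bounds[of "M + r - 1" j] two_le_r by (auto simp: lower_def less_imp_le)
  moreover have "upper j \<le> root_bound r"
  proof (cases "j = 0")
    case False
    then have "j - 1 < Suc M div r"
      using assms window_div_le(1,4) by linarith
    then show ?thesis
      using window_root_bounds[of "Suc M" "j - 1"] False two_le_r by (simp add: upper_def less_imp_le)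
  qed (simp add: upper_def)
  ultimately show ?thesis
    using new_root[of j] assms window_div_le by force
qed

lemma new_root_strict_antimono: "strict_antimono_on {..<(M + r) div r} new_root"
proof (rule strict_antimono_on_lessThanI)
  fix j
  assume "Suc j < (M + r) div r"
  then have j: "j < Suc M div r" "j < (M + r - 1) div r" "Suc M \<le> M + r - 1"
    using window_div_le two_le_r by linarith+
  have "new_root (Suc j) < upper (Suc j)"
    using new_root(2)[of "Suc j"] \<open>Suc j < (M + r) div r\<close> window_div_le by simp
  also have "\<dots> \<le> lower j"
    using window_root_le[of "Suc M" "M + r - 1" j] j two_le_r by (simp add: upper_def lower_def)
  also have "\<dots> < new_root j"
    using new_root(1)[of j] \<open>Suc j < (M + r) div r\<close> window_div_le by simp
  finally show "new_root (Suc j) < new_root j" .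
qed

lemma hseq_eq_prod_new_roots: "hseq r (M + r) = (\<Prod>j<(M + r) div r. [:-new_root j, 1:])"
proof (rule monic_eq_prod_linear_factors)
  show "inj_on new_root {..<(M + r) div r}"
    using new_root_strict_antimono strict_antimono_iff_antimono by blast
  show "poly (hseq r (M + r)) (new_root j) = 0" if "j < (M + r) div r" for j
    using new_root(3)[of j] that window_div_le by simp
qed (simp_all add: degree_hseq coeff_hseq_degree)

lemma interlaced_new_root:
  assumes "Suc M \<le> m" "m < M + r"
  shows "interlaced (\<rho> m) (m div r) new_root ((M + r) div r)"
  unfolding interlaced_def
proof (intro conjI allI impI)
  fix j
  assume "j < m div r"
  moreover have "m div r \<le> (M + r - 1) div r"
    using assms by (intro div_le_mono) simp
  ultimately have "\<rho> m j \<le> lower j"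
    using window_root_le[of m "M + r - 1" j] assms by (simp add: lower_def)
  also have "\<dots> < new_root j"
    using new_root(1)[of j] \<open>j < m div r\<close> \<open>m div r \<le> (M + r - 1) div r\<close> window_div_le by simp
  finally show "\<rho> m j < new_root j" .
next
  fix j
  assume j: "Suc j < (M + r) div r"
  have "new_root (Suc j) < upper (Suc j)"
    using new_root(2)[of "Suc j"] j window_div_le by simp
  also have "\<dots> \<le> \<rho> m j"
  proof -
    have "j < Suc M div r"
      using j window_div_le(1,4) by linarith
    then show ?thesis
      using window_root_le[of "Suc M" m j] assms by (simp add: upper_def)
  qed
  finally show "new_root (Suc j) < \<rho> m j" .
qed

lemma root_window_Suc: "root_window r (Suc M) (\<rho>(M + r := new_root))"
  unfolding root_window_def
proof (intro ballI, goal_cases)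
  case (1 m)
  then show ?case
  proof (cases "m = M + r")
    case True
    then show ?thesis
      using hseq_eq_prod_new_roots new_root_bounds new_root_strict_antimono by auto
  next
    case False
    with 1 have "M \<le> m" "m < M + r"
      by auto
    moreover have "interlaced (\<rho> m) (m div r) ((\<rho>(M + r := new_root)) m') (m' div r)"
      if "m' \<in> {m<..<Suc M + r}" for m'
      using that 1 interlaced_new_root[of m] window_interlaced[of m m'] by auto
    ultimately show ?thesis
      using window False unfolding root_window_def by auto
  qed
qed

end

lemma root_window_exists:
  assumes "2 \<le> r"
  shows "\<exists>\<rho>. root_window r M \<rho>"
proof (induction M)
  case 0
  show ?case
    using root_window_0 by blast
next
  case (Suc M)
  then obtain \<rho> where "root_window r M \<rho>"
    by blast
  then interpret root_window_step r M \<rho>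
    using assms by unfold_locales
  show ?case
    using root_window_Suc by blast
qed

lemma hseq_real_roots:
  assumes "2 \<le> r"
  obtains \<rho> where "hseq r N = (\<Prod>j<N div r. [:-\<rho> j, 1:])"
    and "\<And>j. j < N div r \<Longrightarrow> 0 < \<rho> j \<and> \<rho> j < root_bound r"
proof -
  obtain \<rho> where "root_window r N \<rho>"
    using root_window_exists[OF assms] by blast
  then show ?thesis
    using that[of "\<rho> N"] assms unfolding root_window_def by auto
qed

theorem lemma3:
  fixes r l n :: nat
  assumes "r \<ge> 2" and "l < r" and "n \<ge> 1"
  shows "(\<forall>z::complex. poly (map_poly complex_of_real (hpoly r l n)) z = 0 \<longrightarrow>
            z \<in> \<real> \<and> 0 < Re z \<and> Re z < real r ^ r / real (r - 1) ^ (r - 1))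
         \<and> real r ^ r / real (r - 1) ^ (r - 1) < exp 1 * real r
         \<and> (\<forall>z::complex. poly (map_poly complex_of_real (hpoly r l n)) z = 0 \<longrightarrow>
            z \<in> \<real> \<and> 0 < Re z \<and> Re z < exp 1 * real r)"
proof -
  obtain \<rho> where factor: "hseq r (r * n + l) = (\<Prod>j<n. [:-\<rho> j, 1:])"
    and bounds: "\<And>j. j < n \<Longrightarrow> 0 < \<rho> j \<and> \<rho> j < root_bound r"
    using hseq_real_roots[OF assms(1), of "r * n + l"] assms(2) by auto
  have roots: "z \<in> \<real> \<and> 0 < Re z \<and> Re z < root_bound r"
    if "poly (map_poly complex_of_real (hpoly r l n)) z = 0" for z
  proof -
    have "(\<Prod>j<n. z - of_real (\<rho> j)) = 0"
      using that factor assms(2) by (simp add: hseq_hpoly poly_map_poly_of_real_linear_factors)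
    then obtain j where "j < n" "z = of_real (\<rho> j)"
      by auto
    with bounds show ?thesis
      by auto
  qed
  show ?thesis
    using roots root_bound_less_exp[OF assms(1)] unfolding root_bound_def
    by (meson less_trans)
qed

end
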